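(* For $n\ge1$, $d\ge2$, the coefficients of $p_{n,d}$ regarded as a polynomial in $z$ (coefficients in $\mathbf C[u_{\boldsymbol\nu}:\boldsymbol\nu\neq(d,0,\dots,0)]$) have no nonconstant common divisor.
   Context: $p_{n,d}$ is the irreducible homogeneous polynomial in the coefficients $u_{\boldsymbol\nu}$ of a degree-$d$ form $\sum u_{\boldsymbol\nu}x_0^{\nu_0}\cdots x_n^{\nu_n}$ whose zero set is the set of forms defining singular hypersurfaces of $\mathbf P^n$; $z=u_{(d,0,\dots,0)}$ is the coefficient of $x_0^d$. *)

theory Defs
  imports Complex_Main "HOL-Library.Poly_Mapping" "HOL-Computational_Algebra.Factorial_Ring"
begin

(* Multi-indices nu = (nu_0,...,nu_n) are finitely supported maps nat =>0 nat.
   The coefficient variables u_nu are indexed by multi-indices; a polynomial in the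
   u_nu with complex coefficients is a finitely supported map from monomials
   (multi-index =>0 exponent) to complex numbers. *)
type_synonym mindex = "nat \<Rightarrow>\<^sub>0 nat"
type_synonym cpoly = "((mindex \<Rightarrow>\<^sub>0 nat) \<Rightarrow>\<^sub>0 complex)"

definition mons :: "nat \<Rightarrow> nat \<Rightarrow> mindex set" where
  "mons n d = {\<nu>. Poly_Mapping.keys \<nu> \<subseteq> {..n} \<and> (\<Sum>i\<le>n. Poly_Mapping.lookup \<nu> i) = d}"

definition vars :: "cpoly \<Rightarrow> mindex set" where
  "vars p = (\<Union>m\<in>Poly_Mapping.keys p. Poly_Mapping.keys m)"

definition meval :: "cpoly \<Rightarrow> (mindex \<Rightarrow> complex) \<Rightarrow> complex" where
  "meval p u = (\<Sum>m\<in>Poly_Mapping.keys p. Poly_Mapping.lookup p m * (\<Prod>v\<in>Poly_Mapping.keys m. u v ^ Poly_Mapping.lookup m v))"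

definition homogeneous :: "cpoly \<Rightarrow> bool" where
  "homogeneous p \<longleftrightarrow> (\<exists>k. \<forall>m\<in>Poly_Mapping.keys p. (\<Sum>v\<in>Poly_Mapping.keys m. Poly_Mapping.lookup m v) = k)"

(* formal partial derivative d/dx_i of the form sum_nu u_nu x^nu, evaluated at x *)
definition form_partial :: "nat \<Rightarrow> nat \<Rightarrow> (mindex \<Rightarrow> complex) \<Rightarrow> nat \<Rightarrow> (nat \<Rightarrow> complex) \<Rightarrow> complex" where
  "form_partial n d u i x = (\<Sum>\<nu>\<in>mons n d. u \<nu> * of_nat (Poly_Mapping.lookup \<nu> i) * x i ^ (Poly_Mapping.lookup \<nu> i - 1)
        * (\<Prod>j\<in>{..n} - {i}. x j ^ Poly_Mapping.lookup \<nu> j))"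

(* the form with coefficients u defines a singular hypersurface of P^n:
   all partials vanish at some nonzero point of C^(n+1) *)
definition singular_form :: "nat \<Rightarrow> nat \<Rightarrow> (mindex \<Rightarrow> complex) \<Rightarrow> bool" where
  "singular_form n d u \<longleftrightarrow> (\<exists>x::nat \<Rightarrow> complex. (\<exists>i\<le>n. x i \<noteq> 0) \<and> (\<forall>i\<le>n. form_partial n d u i x = 0))"

definition coeff_in :: "mindex \<Rightarrow> cpoly \<Rightarrow> nat \<Rightarrow> cpoly" where
  "coeff_in z p k = (\<Sum>m\<in>{m\<in>Poly_Mapping.keys p. Poly_Mapping.lookup m z = k}.
       Poly_Mapping.single (Poly_Mapping.update z 0 m) (Poly_Mapping.lookup p m))"

end

theory Submission
  imports Defs "HOL-Library.FuncSet"
begin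

(* A common divisor q of all z-coefficients of p divides p, so by irreducibility q is either
   a unit or an associate of p. The latter is impossible, because the degree in z is additive
   over the integral domain of polynomials and p genuinely involves z: the form
   x_1^d + ... + x_n^d is singular at (1, 0, ..., 0) while x_0^d + ... + x_n^d is smooth,
   and their coefficient vectors differ only in z. *)

lemma sum_single_lookup:
  fixes p :: "'a \<Rightarrow>\<^sub>0 'b::comm_monoid_add"
  shows "(\<Sum>m\<in>Poly_Mapping.keys p. Poly_Mapping.single m (Poly_Mapping.lookup p m)) = p"
proof (rule poly_mapping_eqI)
  fix k
  show "Poly_Mapping.lookup (\<Sum>m\<in>Poly_Mapping.keys p. Poly_Mapping.single m (Poly_Mapping.lookup p m)) k
      = Poly_Mapping.lookup p k"
    by (cases "k \<in> Poly_Mapping.keys p") (simp_all add: lookup_sum lookup_single when_def in_keys_iff)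
qed

lemma lookup_mult_unique_decomposition:
  fixes p r :: "'a::monoid_add \<Rightarrow>\<^sub>0 'b::semiring_0"
  assumes "\<And>a' b'. a' \<in> Poly_Mapping.keys p \<Longrightarrow> b' \<in> Poly_Mapping.keys r \<Longrightarrow> a' + b' = a + b
      \<Longrightarrow> a' = a \<and> b' = b"
  shows "Poly_Mapping.lookup (p * r) (a + b) = Poly_Mapping.lookup p a * Poly_Mapping.lookup r b"
proof -
  have "Poly_Mapping.lookup (p * r) (a + b)
      = (\<Sum>(a', b'). Poly_Mapping.lookup p a' * Poly_Mapping.lookup r b' when a + b = a' + b')"
    by (simp add: times_poly_mapping.rep_eq prod_fun_unfold_prod)
  also have "\<dots> = (\<Sum>ab. (case ab of (a', b') \<Rightarrow> Poly_Mapping.lookup p a' * Poly_Mapping.lookup r b')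
      when (ab = (a, b)))"
  proof (rule Sum_any.cong)
    fix ab :: "'a \<times> 'a"
    obtain a' b' where ab: "ab = (a', b')" by (cases ab)
    show "(case ab of (a', b') \<Rightarrow> Poly_Mapping.lookup p a' * Poly_Mapping.lookup r b' when a + b = a' + b')
        = ((case ab of (a', b') \<Rightarrow> Poly_Mapping.lookup p a' * Poly_Mapping.lookup r b') when (ab = (a, b)))"
      using assms[of a' b'] mult_not_zero[of "Poly_Mapping.lookup p a'" "Poly_Mapping.lookup r b'"]
      unfolding ab by (auto simp: when_def in_keys_iff; blast)
  qed
  also have "\<dots> = Poly_Mapping.lookup p a * Poly_Mapping.lookup r b"
    unfolding when_def by simp
  finally show ?thesis .
qed

definition degree_in :: "'v \<Rightarrow> (('v \<Rightarrow>\<^sub>0 nat) \<Rightarrow>\<^sub>0 'b::zero) \<Rightarrow> nat" where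
  "degree_in v p = Max (insert 0 ((\<lambda>m. Poly_Mapping.lookup m v) ` Poly_Mapping.keys p))"

lemma lookup_le_degree_in:
  "m \<in> Poly_Mapping.keys p \<Longrightarrow> Poly_Mapping.lookup m v \<le> degree_in v p"
  by (simp add: degree_in_def)

lemma degree_in_attained:
  assumes "p \<noteq> 0"
  shows "\<exists>m\<in>Poly_Mapping.keys p. Poly_Mapping.lookup m v = degree_in v p"
proof -
  have "Poly_Mapping.keys p \<noteq> {}" using assms by simp
  then have "degree_in v p \<in> (\<lambda>m. Poly_Mapping.lookup m v) ` Poly_Mapping.keys p"
    unfolding degree_in_def by (simp add: max_def Max_in)
  then show ?thesis by auto
qed

lemma degree_in_eq_0_iff:
  "degree_in v p = 0 \<longleftrightarrow> (\<forall>m\<in>Poly_Mapping.keys p. Poly_Mapping.lookup m v = 0)"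
proof
  assume "degree_in v p = 0"
  then show "\<forall>m\<in>Poly_Mapping.keys p. Poly_Mapping.lookup m v = 0"
    using lookup_le_degree_in[of _ p v] by fastforce
next
  assume "\<forall>m\<in>Poly_Mapping.keys p. Poly_Mapping.lookup m v = 0"
  then have "insert 0 ((\<lambda>m. Poly_Mapping.lookup m v) ` Poly_Mapping.keys p) = {0}" by auto
  then show "degree_in v p = 0" unfolding degree_in_def by (metis Max_singleton)
qed

lemma degree_in_one [simp]: "degree_in v 1 = 0"
  by (simp add: degree_in_eq_0_iff)

text \<open>Among the monomials of top degree in \<open>v\<close>, take the largest one of each factor: their
  sum arises in only one way from the keys, so its coefficient in the product does not cancel.\<close>

lemma degree_in_mult:
  fixes p r :: "('v::linorder \<Rightarrow>\<^sub>0 nat) \<Rightarrow>\<^sub>0 'b::semiring_no_zero_divisors"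
  assumes "p \<noteq> 0" "r \<noteq> 0"
  shows "degree_in v (p * r) = degree_in v p + degree_in v r"
proof (rule antisym)
  let ?w = "\<lambda>m :: 'v \<Rightarrow>\<^sub>0 nat. Poly_Mapping.lookup m v"
  show "degree_in v (p * r) \<le> degree_in v p + degree_in v r"
    unfolding degree_in_def [of v "p * r"]
  proof (rule Max.boundedI)
    fix k assume "k \<in> insert 0 (?w ` Poly_Mapping.keys (p * r))"
    then show "k \<le> degree_in v p + degree_in v r"
      using keys_mult[of p r] by (auto simp: lookup_add intro!: add_mono lookup_le_degree_in)
  qed auto
  define A where "A = {a \<in> Poly_Mapping.keys p. ?w a = degree_in v p}"
  define B where "B = {b \<in> Poly_Mapping.keys r. ?w b = degree_in v r}"
  have "finite A" "A \<noteq> {}" "finite B" "B \<noteq> {}"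
    using degree_in_attained[OF assms(1)] degree_in_attained[OF assms(2)] by (auto simp: A_def B_def)
  then have top: "Max A \<in> A" "Max B \<in> B"
    and le_top: "\<And>a. a \<in> A \<Longrightarrow> a \<le> Max A" "\<And>b. b \<in> B \<Longrightarrow> b \<le> Max B"
    by auto
  have unique: "a = Max A \<and> b = Max B"
    if "a \<in> Poly_Mapping.keys p" "b \<in> Poly_Mapping.keys r" "a + b = Max A + Max B" for a b
  proof -
    have "?w a + ?w b = degree_in v p + degree_in v r"
      using top arg_cong[OF that(3), of ?w] by (simp add: lookup_add A_def B_def)
    with that(1,2) have "a \<in> A" "b \<in> B"
      using lookup_le_degree_in[of a p v] lookup_le_degree_in[of b r v] by (auto simp: A_def B_def)
    then have "a \<le> Max A" "b \<le> Max B" by (auto intro: le_top)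
    moreover have "\<not> a < Max A"
      using add_less_le_mono[of a "Max A" b "Max B"] \<open>b \<le> Max B\<close> that(3) by auto
    ultimately show ?thesis using that(3) by (simp add: order.not_eq_order_implies_strict)
  qed
  have "Poly_Mapping.lookup (p * r) (Max A + Max B)
      = Poly_Mapping.lookup p (Max A) * Poly_Mapping.lookup r (Max B)"
    using unique by (rule lookup_mult_unique_decomposition)
  also have "\<dots> \<noteq> 0" using top by (simp add: A_def B_def in_keys_iff)
  finally have "Max A + Max B \<in> Poly_Mapping.keys (p * r)" by (simp add: in_keys_iff)
  then have "?w (Max A + Max B) \<le> degree_in v (p * r)" by (rule lookup_le_degree_in)
  then show "degree_in v p + degree_in v r \<le> degree_in v (p * r)"
    using top by (simp add: lookup_add A_def B_def)
qed

lemma degree_in_unit: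
  fixes p :: "('v::linorder \<Rightarrow>\<^sub>0 nat) \<Rightarrow>\<^sub>0 'b::{comm_semiring_1, semiring_no_zero_divisors}"
  assumes "p dvd 1"
  shows "degree_in v p = 0"
proof -
  obtain r where "1 = p * r" using assms by (elim dvdE)
  then have "degree_in v p + degree_in v r = 0"
    using degree_in_mult[of p r v] by (metis degree_in_one mult_not_zero zero_neq_one)
  then show ?thesis by simp
qed

lemma degree_in_eq_0_iff_notin_vars: "degree_in v p = 0 \<longleftrightarrow> v \<notin> vars p"
  by (auto simp: degree_in_eq_0_iff vars_def in_keys_iff)

lemma vars_eq_empty_if_unit: "p dvd 1 \<Longrightarrow> vars p = {}"
  using degree_in_unit degree_in_eq_0_iff_notin_vars by blast

lemma coeff_in_expansion:
  "p = (\<Sum>k\<in>(\<lambda>m. Poly_Mapping.lookup m z) ` Poly_Mapping.keys p.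
         coeff_in z p k * Poly_Mapping.single (Poly_Mapping.single z k) 1)"
proof -
  have split_z: "Poly_Mapping.update z 0 m + Poly_Mapping.single z (Poly_Mapping.lookup m z) = m"
    for m :: "mindex \<Rightarrow>\<^sub>0 nat"
    by (rule poly_mapping_eqI) (simp add: lookup_add lookup_update lookup_single when_def)
  have "coeff_in z p k * Poly_Mapping.single (Poly_Mapping.single z k) 1
      = (\<Sum>m\<in>{m\<in>Poly_Mapping.keys p. Poly_Mapping.lookup m z = k}.
           Poly_Mapping.single m (Poly_Mapping.lookup p m))" for k
    unfolding coeff_in_def sum_distrib_right mult_single
    by (intro sum.cong refl) (use split_z in auto)
  then have "(\<Sum>k\<in>(\<lambda>m. Poly_Mapping.lookup m z) ` Poly_Mapping.keys p.
         coeff_in z p k * Poly_Mapping.single (Poly_Mapping.single z k) 1)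
      = (\<Sum>m\<in>Poly_Mapping.keys p. Poly_Mapping.single m (Poly_Mapping.lookup p m))"
    by (simp add: sum.group)
  then show ?thesis by (simp add: sum_single_lookup)
qed

lemma dvd_if_dvd_coeff_in: "(\<And>k. q dvd coeff_in z p k) \<Longrightarrow> q dvd p"
  by (subst coeff_in_expansion[of p z]) (intro dvd_sum dvd_mult2)

lemma meval_fun_upd_notin_vars:
  assumes "z \<notin> vars p"
  shows "meval p (u(z := t)) = meval p u"
  unfolding meval_def
proof (intro sum.cong refl arg_cong2[where f = "(*)"] prod.cong)
  fix m v assume "m \<in> Poly_Mapping.keys p" "v \<in> Poly_Mapping.keys m"
  then have "v \<noteq> z" using assms by (auto simp: vars_def)
  then show "(u(z := t)) v ^ Poly_Mapping.lookup m v = u v ^ Poly_Mapping.lookup m v" by simp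
qed

lemma finite_mons: "finite (mons n d)"
proof -
  let ?f = "\<lambda>\<nu>::mindex. restrict (Poly_Mapping.lookup \<nu>) {..n}"
  have "?f ` mons n d \<subseteq> PiE {..n} (\<lambda>_. {..d})"
  proof
    fix g assume "g \<in> ?f ` mons n d"
    then obtain \<nu> where \<nu>: "\<nu> \<in> mons n d" "g = ?f \<nu>" by blast
    have "Poly_Mapping.lookup \<nu> j \<le> (\<Sum>i\<le>n. Poly_Mapping.lookup \<nu> i)" if "j \<le> n" for j
      using that by (intro member_le_sum) auto
    then show "g \<in> PiE {..n} (\<lambda>_. {..d})" using \<nu> by (auto simp: PiE_iff mons_def)
  qed
  then have "finite (?f ` mons n d)" by (rule finite_subset) (simp add: finite_PiE)
  moreover have "inj_on ?f (mons n d)"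
  proof
    fix a b assume ab: "a \<in> mons n d" "b \<in> mons n d" "?f a = ?f b"
    show "a = b"
    proof (rule poly_mapping_eqI)
      fix k
      show "Poly_Mapping.lookup a k = Poly_Mapping.lookup b k"
      proof (cases "k \<le> n")
        case True
        then show ?thesis using fun_cong[OF ab(3), of k] by simp
      next
        case False
        then have "k \<notin> Poly_Mapping.keys a" "k \<notin> Poly_Mapping.keys b"
          using ab(1,2) by (auto simp: mons_def)
        then show ?thesis by (simp add: in_keys_iff)
      qed
    qed
  qed
  ultimately show ?thesis by (rule finite_imageD)
qed

lemma single_in_mons: "i \<le> n \<Longrightarrow> Poly_Mapping.single i d \<in> mons n d"
  by (auto simp: mons_def lookup_single when_def)

lemma form_partial_pure_powers:
  assumes "i \<le> n" and pure: "\<And>\<nu>. u \<nu> \<noteq> 0 \<Longrightarrow> \<exists>j\<le>n. \<nu> = Poly_Mapping.single j d"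
  shows "form_partial n d u i x = u (Poly_Mapping.single i d) * of_nat d * x i ^ (d - 1)"
proof -
  let ?g = "\<lambda>\<nu>. u \<nu> * of_nat (Poly_Mapping.lookup \<nu> i) * x i ^ (Poly_Mapping.lookup \<nu> i - 1)
        * (\<Prod>j\<in>{..n} - {i}. x j ^ Poly_Mapping.lookup \<nu> j)"
  have vanish: "?g \<nu> = 0" if "\<nu> \<noteq> Poly_Mapping.single i d" for \<nu>
  proof (cases "u \<nu> = 0")
    case False
    then obtain j where "\<nu> = Poly_Mapping.single j d" using pure by blast
    with that have "Poly_Mapping.lookup \<nu> i = 0" by (auto simp: lookup_single when_def)
    then show ?thesis by simp
  qed simp
  have "form_partial n d u i x = sum ?g (mons n d)" by (simp add: form_partial_def)
  also have "\<dots> = sum ?g {Poly_Mapping.single i d}"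
    using vanish single_in_mons[OF assms(1)] by (intro sum.mono_neutral_right[OF finite_mons]) auto
  also have "\<dots> = u (Poly_Mapping.single i d) * of_nat d * x i ^ (d - 1)"
    by (simp add: lookup_single when_def)
  finally show ?thesis .
qed

lemma singular_form_pure_powers_iff:
  assumes "d \<ge> 2" and pure: "\<And>\<nu>. u \<nu> \<noteq> 0 \<Longrightarrow> \<exists>j\<le>n. \<nu> = Poly_Mapping.single j d"
  shows "singular_form n d u \<longleftrightarrow> (\<exists>i\<le>n. u (Poly_Mapping.single i d) = 0)"
proof
  assume "singular_form n d u"
  then obtain x :: "nat \<Rightarrow> complex" and i where "i \<le> n" "x i \<noteq> 0" "form_partial n d u i x = 0"
    unfolding singular_form_def by blast
  then show "\<exists>i\<le>n. u (Poly_Mapping.single i d) = 0"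
    using form_partial_pure_powers[of i n u d x] pure assms(1) by auto
next
  assume "\<exists>i\<le>n. u (Poly_Mapping.single i d) = 0"
  then obtain i where "i \<le> n" "u (Poly_Mapping.single i d) = 0" by blast
  moreover have "form_partial n d u j (\<lambda>k. if k = i then 1 else 0) = 0" if "j \<le> n" "j \<noteq> i" for j
    using form_partial_pure_powers[OF that(1) pure] assms(1) that(2) by simp
  ultimately show "singular_form n d u"
    unfolding singular_form_def using form_partial_pure_powers[of i n u d] pure
    by (intro exI[of _ "\<lambda>k. if k = i then 1 else 0"]) auto
qed

lemma pure_power_in_vars:
  assumes "d \<ge> 2" "i \<le> n" and discriminant: "\<forall>u. meval p u = 0 \<longleftrightarrow> singular_form n d u"
  shows "Poly_Mapping.single i d \<in> vars p"
proof (rule ccontr)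
  assume notin: "Poly_Mapping.single i d \<notin> vars p"
  define u :: "mindex \<Rightarrow> complex" where
    "u \<nu> = (if \<exists>j\<le>n. \<nu> = Poly_Mapping.single j d then 1 else 0)" for \<nu>
  have pure: "\<exists>j\<le>n. \<nu> = Poly_Mapping.single j d" if "u \<nu> \<noteq> 0" for \<nu>
    using that by (auto simp: u_def split: if_splits)
  have "singular_form n d u \<longleftrightarrow> (\<exists>j\<le>n. u (Poly_Mapping.single j d) = 0)"
    using assms(1) pure by (rule singular_form_pure_powers_iff)
  then have "\<not> singular_form n d u" by (auto simp: u_def)
  moreover have "singular_form n d (u(Poly_Mapping.single i d := 0))"
    by (subst singular_form_pure_powers_iff[OF assms(1)])
      (use pure assms(2) in \<open>auto split: if_splits\<close>)
  ultimately show False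
    using discriminant meval_fun_upd_notin_vars[OF notin] by metis
qed

theorem mainTheorem7:
  fixes n d :: nat and p :: cpoly
  assumes "n \<ge> 1" and "d \<ge> 2"
    and "vars p \<subseteq> mons n d"
    and "homogeneous p"
    and "irreducible p"
    and "\<forall>u. meval p u = 0 \<longleftrightarrow> singular_form n d u"
  shows "\<forall>q::cpoly. Poly_Mapping.single 0 d \<notin> vars q
            \<and> (\<forall>k. q dvd coeff_in (Poly_Mapping.single 0 d) p k) \<longrightarrow> vars q = {}"
proof (intro allI impI)
  fix q :: cpoly
  let ?z = "Poly_Mapping.single 0 d :: mindex"
  assume q: "?z \<notin> vars q \<and> (\<forall>k. q dvd coeff_in ?z p k)"
  then have "q dvd p" using dvd_if_dvd_coeff_in[of q ?z p] by blast
  then obtain s where p: "p = q * s" by (rule dvdE)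
  have "p \<noteq> 0" using assms(5) by auto
  with p have "q \<noteq> 0" "s \<noteq> 0" by auto
  have "?z \<in> vars p" using assms(2) le0 assms(6) by (rule pure_power_in_vars)
  with q have "degree_in ?z p \<noteq> 0" "degree_in ?z q = 0"
    by (simp_all add: degree_in_eq_0_iff_notin_vars)
  moreover have "degree_in ?z p = degree_in ?z q + degree_in ?z s"
    unfolding p using \<open>q \<noteq> 0\<close> \<open>s \<noteq> 0\<close> by (rule degree_in_mult)
  ultimately have "degree_in ?z s \<noteq> 0" by simp
  then have "\<not> s dvd 1" using degree_in_unit by (rule contrapos_nn)
  then have "q dvd 1" using irreducibleD[OF assms(5) p] by blast
  then show "vars q = {}" by (rule vars_eq_empty_if_unit)
qed

end
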